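(* Let $N$ be a well-formed system (coherent and $\vdash N:\mathbf{ok}$) in the calculus with multiset entry policies. For every trustworthy site $l[\![M\rhd P_1|\dots|P_n]\!]$ of $N$ with each $P_i$ a thread, and every $i$, $\sigma$, $P_i'$ with $P_i\xrightarrow{\sigma}P_i'$, we have $\mathrm{Set}(\sigma)\subseteq M_p$ (multiset inclusion), where $\mathrm{Set}(\sigma)$ is the multiset of all elements occurring in $\sigma$, counted with multiplicity.
   Context: Fix disjoint sets $\mathsf{Act}$ (actions) and $\mathsf{Loc}$ (localities). A policy is a multiset over $\mathsf{Act}\cup\mathsf{Loc}$ with finite support and multiplicities in $\mathbb{N}\cup\{\omega\}$; $\cup$ is multiset union (multiplicities add), $\subseteq$ is multiset inclusion, $T^\omega$ gives multiplicity $\omega$ to every element of the support of $T$. Agents: $P ::= \mathbf{nil} \mid a.P \mid \mathbf{go}_T\, l.P \mid P\,|\,Q \mid\ !P$. Systems: $N ::= \mathbf{0} \mid l[\![M \rhd P]\!] \mid N_1\parallel N_2$, site names pairwise distinct. A membrane is $M=(M_t,M_p)$, $M_t$ a partial function $\mathsf{Loc}\to\{\mathtt{loc},\mathtt{lgood},\mathtt{lbad}\}$, $M_p$ a policy. $\vdash P:T$ is the least relation with: $\vdash\mathbf{nil}:T$; $\vdash a.P:T\cup\{a\}$ if $\vdash P:T$; $\vdash\mathbf{go}_{T'}\,l.P:T\cup\{l\}$ if $\vdash P:T'$; $\vdash P|Q:T_1\cup T_2$ if $\vdash P:T_1$, $\vdash Q:T_2$; $\vdash\ !P:T'$ if $\vdash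 P:T$ and $T^\omega\subseteq T'$. Trust order $<:$ reflexive with $\mathtt{loc}<:\mathtt{lbad}$, $\mathtt{loc}<:\mathtt{lgood}$; $k$ trustworthy iff $M^k_t(k)=\mathtt{lgood}$; $N$ coherent iff for every trustworthy $k$ and site $l$ with $M^k_t(l)$ defined, $M^k_t(l)<:M^l_t(l)$. A thread is an agent not of the form $P_1|P_2$. $\vdash N:\mathbf{ok}$: $\vdash\mathbf{0}:\mathbf{ok}$; $\vdash N_1\parallel N_2:\mathbf{ok}$ if both are; $\vdash l[\![M\rhd P_1|\dots|P_n]\!]:\mathbf{ok}$ if $l$ trustworthy, each $P_i$ a thread with $\vdash P_i:M_p$; $\vdash l[\![M\rhd P]\!]:\mathbf{ok}$ if $l$ not trustworthy. Labelled transitions ($\alpha\in\mathsf{Act}\cup\mathsf{Loc}$): $a.P\xrightarrow{a}P$; $\mathbf{go}_T\,l.P\xrightarrow{l}\mathbf{nil}$; if $P|!P\xrightarrow{\alpha}P'$ then $!P\xrightarrow{\alpha}P'$; if $P_1\xrightarrow{\alpha}P_1'$ then $P_1|P_2\xrightarrow{\alpha}P_1'|P_2$ and $P_2|P_1\xrightarrow{\alpha}P_2|P_1'$. $P\xrightarrow{\alpha_1\cdots\alpha_n}P'$ means a chain $P=P_0\xrightarrow{\alpha_1}\cdots\xrightarrow{\alpha_n}P_n=P'$. *)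

theory Defs
  imports Main "HOL-Library.Extended_Nat"
begin

text \<open>Actions are 'a, localities are 'l; the disjoint union Act + Loc is the sum type.
  A policy is a multiset with multiplicities in nat + {omega} (= enat), finite support.\<close>

type_synonym ('a, 'l) policy = "('a + 'l) \<Rightarrow> enat"

definition is_policy :: "('a, 'l) policy \<Rightarrow> bool" where
  "is_policy T \<longleftrightarrow> finite {x. T x \<noteq> 0}"

definition pol_union :: "('a, 'l) policy \<Rightarrow> ('a, 'l) policy \<Rightarrow> ('a, 'l) policy" where
  "pol_union T1 T2 = (\<lambda>x. T1 x + T2 x)"

definition pol_sub :: "('a, 'l) policy \<Rightarrow> ('a, 'l) policy \<Rightarrow> bool" where
  "pol_sub T1 T2 \<longleftrightarrow> (\<forall>x. T1 x \<le> T2 x)"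

definition pol_omega :: "('a, 'l) policy \<Rightarrow> ('a, 'l) policy" where
  "pol_omega T = (\<lambda>x. if T x \<noteq> 0 then \<infinity> else 0)"

definition pol_single :: "'a + 'l \<Rightarrow> ('a, 'l) policy" where
  "pol_single y = (\<lambda>x. if x = y then 1 else 0)"

datatype ('a, 'l) agent =
    ANil
  | APrefix 'a "('a, 'l) agent"
  | AGo "('a, 'l) policy" 'l "('a, 'l) agent"
  | APar "('a, 'l) agent" "('a, 'l) agent"
  | ABang "('a, 'l) agent"

datatype trust = Loc | LGood | LBad

record ('a, 'l) membrane =
  Mt :: "'l \<Rightarrow> trust option"
  Mp :: "('a, 'l) policy"

datatype ('a, 'l) sys =
    SZero
  | SSite 'l "('a, 'l) membrane" "('a, 'l) agent"
  | SPar "('a, 'l) sys" "('a, 'l) sys"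

fun sites :: "('a, 'l) sys \<Rightarrow> ('l \<times> ('a, 'l) membrane \<times> ('a, 'l) agent) list" where
  "sites SZero = []"
| "sites (SSite l M P) = [(l, M, P)]"
| "sites (SPar N1 N2) = sites N1 @ sites N2"

definition distinct_sites :: "('a, 'l) sys \<Rightarrow> bool" where
  "distinct_sites N \<longleftrightarrow> distinct (map fst (sites N))"

inductive typed :: "('a, 'l) agent \<Rightarrow> ('a, 'l) policy \<Rightarrow> bool" where
  t_nil: "is_policy T \<Longrightarrow> typed ANil T"
| t_act: "typed P T \<Longrightarrow> typed (APrefix a P) (pol_union T (pol_single (Inl a)))"
| t_go: "typed P T' \<Longrightarrow> is_policy T \<Longrightarrow> typed (AGo T' l P) (pol_union T (pol_single (Inr l)))"
| t_par: "typed P T1 \<Longrightarrow> typed Q T2 \<Longrightarrow> typed (APar P Q) (pol_union T1 T2)"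
| t_bang: "typed P T \<Longrightarrow> is_policy T' \<Longrightarrow> pol_sub (pol_omega T) T' \<Longrightarrow> typed (ABang P) T'"


definition is_thread :: "('a, 'l) agent \<Rightarrow> bool" where
  "is_thread P \<longleftrightarrow> (\<forall>P1 P2. P \<noteq> APar P1 P2)"

fun comps :: "('a, 'l) agent \<Rightarrow> ('a, 'l) agent list" where
  "comps (APar P Q) = comps P @ comps Q"
| "comps P = [P]"

fun trust_le :: "trust \<Rightarrow> trust \<Rightarrow> bool" where
  "trust_le Loc LBad = True"
| "trust_le Loc LGood = True"
| "trust_le t t' = (t = t')"

definition trustworthy :: "('a, 'l) sys \<Rightarrow> 'l \<Rightarrow> bool" where
  "trustworthy N k \<longleftrightarrow> (\<exists>M P. (k, M, P) \<in> set (sites N) \<and> Mt M k = Some LGood)"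

definition coherent :: "('a, 'l) sys \<Rightarrow> bool" where
  "coherent N \<longleftrightarrow> (\<forall>k Mk Pk l Ml Pl t. (k, Mk, Pk) \<in> set (sites N) \<and> Mt Mk k = Some LGood
      \<and> (l, Ml, Pl) \<in> set (sites N) \<and> Mt Mk l = Some t
      \<longrightarrow> (\<exists>t'. Mt Ml l = Some t' \<and> trust_le t t'))"

inductive sys_ok :: "('a, 'l) sys \<Rightarrow> bool" where
  ok_zero: "sys_ok SZero"
| ok_par: "sys_ok N1 \<Longrightarrow> sys_ok N2 \<Longrightarrow> sys_ok (SPar N1 N2)"
| ok_trusted: "Mt M l = Some LGood \<Longrightarrow> (\<forall>Q \<in> set (comps P). typed Q (Mp M))
     \<Longrightarrow> sys_ok (SSite l M P)"
| ok_untrusted: "Mt M l \<noteq> Some LGood \<Longrightarrow> sys_ok (SSite l M P)"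

inductive step :: "('a, 'l) agent \<Rightarrow> 'a + 'l \<Rightarrow> ('a, 'l) agent \<Rightarrow> bool" where
  s_act: "step (APrefix a P) (Inl a) P"
| s_go: "step (AGo T l P) (Inr l) ANil"
| s_bang: "step (APar P (ABang P)) \<alpha> P' \<Longrightarrow> step (ABang P) \<alpha> P'"
| s_parL: "step P1 \<alpha> P1' \<Longrightarrow> step (APar P1 P2) \<alpha> (APar P1' P2)"
| s_parR: "step P1 \<alpha> P1' \<Longrightarrow> step (APar P2 P1) \<alpha> (APar P2 P1')"

inductive steps :: "('a, 'l) agent \<Rightarrow> ('a + 'l) list \<Rightarrow> ('a, 'l) agent \<Rightarrow> bool" where
  steps_nil: "steps P [] P"
| steps_cons: "step P \<alpha> P'' \<Longrightarrow> steps P'' \<sigma> P' \<Longrightarrow> steps P (\<alpha> # \<sigma>) P'"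

definition set_of_trace :: "('a + 'l) list \<Rightarrow> ('a, 'l) policy" where
  "set_of_trace \<sigma> = (\<lambda>x. enat (count_list \<sigma> x))"

definition well_formed :: "('a, 'l) sys \<Rightarrow> bool" where
  "well_formed N \<longleftrightarrow> coherent N \<and> sys_ok N"

end

theory Submission
  imports Defs
begin

text \<open>Typing is a resource bound: if \<open>P\<close> has type \<open>T\<close> and \<open>P\<close> performs \<open>\<alpha>\<close> becoming \<open>P'\<close>,
  then \<open>P'\<close> has a type \<open>T'\<close> with \<open>T' \<union> {\<alpha>} \<subseteq> T\<close>. Iterating along a trace, the multiset of
  performed actions is contained in the type of the initial agent. In a well-formed system every
  thread of a trustworthy site is typed by the site's policy, which gives the bound.
  Replication is harmless because \<open>!P : T'\<close> forces \<open>T'\<close> to contain \<open>T\<^sup>\<omega>\<close>, which absorbs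
  the extra copy of \<open>P\<close> unfolded by a transition.\<close>

lemma pol_sub_refl: "pol_sub T T"
  by (simp add: pol_sub_def)

lemma pol_sub_trans: "pol_sub T1 T2 \<Longrightarrow> pol_sub T2 T3 \<Longrightarrow> pol_sub T1 T3"
  unfolding pol_sub_def by (meson order_trans)

lemma pol_union_mono: "pol_sub T1 T1' \<Longrightarrow> pol_sub T2 T2' \<Longrightarrow> pol_sub (pol_union T1 T2) (pol_union T1' T2')"
  unfolding pol_sub_def pol_union_def by (simp add: add_mono)

lemma pol_union_commute: "pol_union T1 T2 = pol_union T2 T1"
  by (simp add: pol_union_def add.commute)

lemma pol_union_assoc: "pol_union (pol_union T1 T2) T3 = pol_union T1 (pol_union T2 T3)"
  by (simp add: pol_union_def add.assoc)

lemma pol_union_omega_absorb: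
  assumes "pol_sub (pol_omega T) T'"
  shows "pol_union T T' = T'"
proof
  fix x
  show "pol_union T T' x = T' x"
  proof (cases "T x = 0")
    case True
    then show ?thesis by (simp add: pol_union_def)
  next
    case False
    then have "T' x = \<infinity>"
      using assms unfolding pol_sub_def pol_omega_def by (metis enat_ord_simps(5))
    then show ?thesis by (simp add: pol_union_def)
  qed
qed

lemma pol_sub_set_of_trace_Nil: "pol_sub (set_of_trace []) T"
  by (simp add: pol_sub_def set_of_trace_def zero_enat_def[symmetric])

lemma set_of_trace_Cons: "set_of_trace (\<alpha> # \<sigma>) = pol_union (set_of_trace \<sigma>) (pol_single \<alpha>)"
  by (auto simp: set_of_trace_def pol_union_def pol_single_def one_enat_def)

lemma typed_APar_ABang:
  assumes "typed (ABang P) T"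
  shows "typed (APar P (ABang P)) T"
proof -
  from assms obtain T0 where "typed P T0" "pol_sub (pol_omega T0) T"
    by (auto elim: typed.cases)
  then show ?thesis
    using typed.t_par[OF \<open>typed P T0\<close> assms] pol_union_omega_absorb by metis
qed

lemma step_typed:
  assumes "step P \<alpha> P'" and "typed P T"
  shows "\<exists>T'. typed P' T' \<and> pol_sub (pol_union T' (pol_single \<alpha>)) T"
  using assms
proof (induction arbitrary: T rule: step.induct)
  case (s_act a P)
  then show ?case by (auto elim: typed.cases simp: pol_sub_def)
next
  case (s_go T0 l P)
  then obtain T1 where "is_policy T1" "T = pol_union T1 (pol_single (Inr l))"
    by (auto elim: typed.cases)
  then show ?case by (auto intro: typed.t_nil simp: pol_sub_refl)
next
  case (s_bang P \<alpha> P')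
  then show ?case using typed_APar_ABang by blast
next
  case (s_parL P1 \<alpha> P1' P2)
  from s_parL.prems obtain T1 T2 where "typed P1 T1" "typed P2 T2" "T = pol_union T1 T2"
    by (auto elim: typed.cases)
  with s_parL.IH obtain T1' where "typed P1' T1'" "pol_sub (pol_union T1' (pol_single \<alpha>)) T1"
    by blast
  moreover from this \<open>T = _\<close> have "pol_sub (pol_union (pol_union T1' (pol_single \<alpha>)) T2) T"
    by (simp add: pol_union_mono pol_sub_refl)
  ultimately show ?case
    using \<open>typed P2 T2\<close> by (metis typed.t_par pol_union_assoc pol_union_commute)
next
  case (s_parR P1 \<alpha> P1' P2)
  from s_parR.prems obtain T1 T2 where "typed P2 T1" "typed P1 T2" "T = pol_union T1 T2"
    by (auto elim: typed.cases)
  with s_parR.IH obtain T2' where "typed P1' T2'" "pol_sub (pol_union T2' (pol_single \<alpha>)) T2"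
    by blast
  moreover from this \<open>T = _\<close> have "pol_sub (pol_union T1 (pol_union T2' (pol_single \<alpha>))) T"
    by (simp add: pol_union_mono pol_sub_refl)
  ultimately show ?case
    using \<open>typed P2 T1\<close> by (metis typed.t_par pol_union_assoc)
qed

lemma steps_typed:
  assumes "steps P \<sigma> P'" and "typed P T"
  shows "pol_sub (set_of_trace \<sigma>) T"
  using assms
proof (induction arbitrary: T rule: steps.induct)
  case (steps_nil P)
  show ?case by (rule pol_sub_set_of_trace_Nil)
next
  case (steps_cons P \<alpha> P'' \<sigma> P')
  then obtain T' where "typed P'' T'" and consumed: "pol_sub (pol_union T' (pol_single \<alpha>)) T"
    using step_typed by blast
  then have "pol_sub (set_of_trace \<sigma>) T'"
    using steps_cons.IH by blast
  then have "pol_sub (set_of_trace (\<alpha> # \<sigma>)) (pol_union T' (pol_single \<alpha>))"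
    by (simp add: set_of_trace_Cons pol_union_mono pol_sub_refl)
  then show ?case
    using consumed by (rule pol_sub_trans)
qed

lemma sys_ok_trusted_thread_typed:
  assumes "sys_ok N" and "(l, M, P) \<in> set (sites N)" and "Mt M l = Some LGood"
    and "Q \<in> set (comps P)"
  shows "typed Q (Mp M)"
  using assms by (induction rule: sys_ok.induct) auto

lemma trustworthy_site:
  assumes "distinct_sites N" and "(l, M, P) \<in> set (sites N)" and "trustworthy N l"
  shows "Mt M l = Some LGood"
proof -
  from assms(3) obtain M' P' where "(l, M', P') \<in> set (sites N)" "Mt M' l = Some LGood"
    unfolding trustworthy_def by blast
  moreover from this assms(1,2) have "(M', P') = (M, P)"
    unfolding distinct_sites_def by (metis eq_key_imp_eq_value)
  ultimately show ?thesis by simp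
qed

theorem mainTheorem5:
  fixes N :: "('a, 'l) sys"
  assumes "distinct_sites N"
    and "well_formed N"
    and "(l, M, P) \<in> set (sites N)"
    and "trustworthy N l"
    and "Pi \<in> set (comps P)"
    and "steps Pi \<sigma> Pi'"
  shows "pol_sub (set_of_trace \<sigma>) (Mp M)"
proof -
  have trusted: "Mt M l = Some LGood"
    using assms(1,3,4) by (rule trustworthy_site)
  have "sys_ok N"
    using assms(2) unfolding well_formed_def by blast
  then have "typed Pi (Mp M)"
    using assms(3) trusted assms(5) by (rule sys_ok_trusted_thread_typed)
  with assms(6) show ?thesis
    by (rule steps_typed)
qed

end
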